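(* Let $\lambda\in(0,1)$. Consider the maps $\tau_0(x)=\lambda x$ and $\tau_{1/4}(x)=\lambda\left(x+\frac14\right)$ on $\mathbb{R}$, let $X_L$ be their attractor, and let $W(x)=\cos^2\left(\frac{2\pi x}{\lambda}\right)$. Then there is no $W$-cycle of (minimal) length $p>1$ for this system; that is, there do not exist $p\ge 2$, a point $x\in X_L$ and letters $\omega_1,\dots,\omega_p\in\{0,\frac14\}$ such that $\tau_{\omega_p}\cdots\tau_{\omega_1}x=x$, the points $x,\tau_{\omega_1}x,\dots,\tau_{\omega_{p-1}}\cdots\tau_{\omega_1}x$ form a cycle of minimal length $p$, and $W=1$ at every point of this cycle.
   Context: The attractor $X_L$ is the unique nonempty compact set $X_L\subset\mathbb{R}$ with $X_L=\tau_0(X_L)\cup\tau_{1/4}(X_L)$; equivalently $X_L=\{\sum_{k\ge1}\omega_k\lambda^k:\omega_k\in\{0,\frac14\}\}$. A cycle: if $x\in X_L$ satisfies $\tau_{\omega_p}\cdots\tau_{\omega_1}x=x$ for some $\omega_1,\dots,\omega_p\in\{0,\frac14\}$, the set $C=\{x,\tau_{\omega_1}x,\dots,\tau_{\omega_{p-1}}\cdots\tau_{\omega_1}x\}$ is a cycle; if $p$ is the minimal period with which it closes up, $C$ is a $p$-cycle. A $W$-cycle is a cycle $C$ with $W(y)=1$ for all $y\in C$. *)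

theory Defs
  imports "HOL-Analysis.Analysis"
begin

definition tau :: "real \<Rightarrow> real \<Rightarrow> real \<Rightarrow> real" where
  "tau lam w x = lam * (x + w)"

text \<open>The attractor X_L, via its explicit description
  X_L = { sum_{k>=1} omega_k lambda^k : omega_k in {0, 1/4} }.\<close>
definition XL :: "real \<Rightarrow> real set" where
  "XL lam = {x. \<exists>om :: nat \<Rightarrow> real. (\<forall>k. om k \<in> {0, 1/4}) \<and>
                   x = (\<Sum>k. om k * lam ^ (Suc k))}"

definition W :: "real \<Rightarrow> real \<Rightarrow> real" where
  "W lam x = (cos (2 * pi * x / lam))\<^sup>2"

text \<open>orbit lam ws x j = tau_{ws!(j-1)} ... tau_{ws!0} x (apply the first j letters).\<close>
definition orbit :: "real \<Rightarrow> real list \<Rightarrow> real \<Rightarrow> nat \<Rightarrow> real" where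
  "orbit lam ws x j = foldl (\<lambda>y w. tau lam w y) x (take j ws)"

definition W_cycle :: "real \<Rightarrow> real list \<Rightarrow> real \<Rightarrow> bool" where
  "W_cycle lam ws x \<longleftrightarrow>
     x \<in> XL lam \<and> set ws \<subseteq> {0, 1/4} \<and> length ws \<ge> 1 \<and>
     orbit lam ws x (length ws) = x \<and>
     (\<forall>q. 0 < q \<and> q < length ws \<longrightarrow> orbit lam ws x q \<noteq> x) \<and>
     (\<forall>j < length ws. W lam (orbit lam ws x j) = 1)"

end

theory Submission
  imports Defs
begin

text \<open>The condition W = 1 confines every cycle point to the lattice (\<lambda>/2)\<int>, and all cycle
  points are nonnegative. Writing y = \<lambda>k/2 with k \<ge> 0, the image \<tau> w y = \<lambda>k'/2 has
  k' = \<lambda>k + 2w < k + 1, so k' \<le> k: along a W-cycle the points never increase. A periodic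
  nonincreasing sequence is constant, hence the cycle closes after one step.\<close>

lemma W_eq_1_imp_half_lattice:
  assumes "0 < lam" "W lam y = 1"
  obtains k :: int where "y = lam * of_int k / 2"
proof -
  have "(sin (2 * pi * y / lam))\<^sup>2 = 0"
    using assms(2) unfolding W_def by (simp add: sin_squared_eq)
  then obtain i :: int where "2 * pi * y / lam = of_int i * pi"
    using sin_zero_iff_int2 by auto
  then have "y = lam * of_int i / 2"
    using assms(1) by (simp add: field_simps)
  then show thesis by (rule that)
qed

lemma XL_nonneg:
  assumes "0 \<le> lam" "lam < 1" "x \<in> XL lam"
  shows "0 \<le> x"
proof -
  obtain om where om: "\<And>k. om k \<in> {0, 1/4}" and x: "x = (\<Sum>k. om k * lam ^ Suc k)"
    using assms(3) unfolding XL_def by blast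
  have term_nonneg: "0 \<le> om k * lam ^ Suc k" for k
    using om[of k] assms(1) by auto
  have bound: "norm (om k * lam ^ Suc k) \<le> lam ^ Suc k" for k
  proof -
    have "om k * lam ^ Suc k \<le> 1 * lam ^ Suc k"
      using om[of k] assms(1) by (intro mult_right_mono) auto
    then show ?thesis
      using term_nonneg[of k] by simp
  qed
  have "summable (\<lambda>k. lam ^ Suc k)"
    using assms by (simp add: summable_geometric summable_mult)
  then have "summable (\<lambda>k. om k * lam ^ Suc k)"
    using bound by (rule summable_comparison_test')
  then show ?thesis
    unfolding x using term_nonneg by (simp add: suminf_nonneg)
qed

lemma orbit_0 [simp]: "orbit lam ws x 0 = x"
  unfolding orbit_def by simp

lemma orbit_Suc:
  assumes "j < length ws"
  shows "orbit lam ws x (Suc j) = tau lam (ws ! j) (orbit lam ws x j)"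
  using assms unfolding orbit_def by (simp add: take_Suc_conv_app_nth)

lemma foldl_tau_nonneg:
  assumes "0 \<le> lam" "\<forall>w \<in> set ws. 0 \<le> w" "0 \<le> x"
  shows "0 \<le> foldl (\<lambda>y w. tau lam w y) x ws"
  using assms by (induction ws arbitrary: x) (auto simp: tau_def)

lemma orbit_nonneg:
  assumes "0 \<le> lam" "\<forall>w \<in> set ws. 0 \<le> w" "0 \<le> x"
  shows "0 \<le> orbit lam ws x j"
  unfolding orbit_def
  by (rule foldl_tau_nonneg[OF assms(1) _ assms(3)]) (use assms(2) in \<open>auto dest: in_set_takeD\<close>)

lemma tau_le_on_half_lattice:
  assumes "0 < lam" "lam \<le> 1" "w < 1/2" "0 \<le> y"
    and "W lam y = 1" "W lam (tau lam w y) = 1"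
  shows "tau lam w y \<le> y"
proof -
  obtain k :: int where k: "y = lam * of_int k / 2"
    using W_eq_1_imp_half_lattice assms(1,5) by blast
  obtain k' :: int where k': "tau lam w y = lam * of_int k' / 2"
    using W_eq_1_imp_half_lattice assms(1,6) by blast
  have "0 \<le> k"
    using assms(1,4) k by (simp add: zero_le_mult_iff)
  have "lam * of_int k' = lam * (lam * of_int k + 2 * w)"
    using k k' by (simp add: tau_def field_simps)
  then have "of_int k' = lam * of_int k + 2 * w"
    using assms(1) by simp
  also have "\<dots> < of_int k + 1"
    using assms \<open>0 \<le> k\<close> mult_left_le_one_le[of "of_int k" lam] by simp
  finally have "k' \<le> k" by linarith
  then have "lam * of_int k' \<le> lam * of_int k"
    using assms(1) by simp
  then show ?thesis
    using k k' by simp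
qed

lemma W_cycle_orbit_nonneg:
  assumes "0 \<le> lam" "lam < 1" "W_cycle lam ws x"
  shows "0 \<le> orbit lam ws x j"
proof (rule orbit_nonneg)
  show "\<forall>w \<in> set ws. 0 \<le> w" and "0 \<le> x"
    using assms XL_nonneg unfolding W_cycle_def by auto
qed (use assms in simp)

lemma W_cycle_orbit_W:
  assumes "W_cycle lam ws x" "j \<le> length ws"
  shows "W lam (orbit lam ws x j) = 1"
proof (cases "j < length ws")
  case False
  then have "orbit lam ws x j = orbit lam ws x 0"
    using assms unfolding W_cycle_def by (simp add: not_less)
  moreover have "0 < length ws"
    using assms(1) unfolding W_cycle_def by (simp add: Suc_le_eq)
  ultimately show ?thesis
    using assms(1) unfolding W_cycle_def by metis
qed (use assms in \<open>simp add: W_cycle_def\<close>)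

lemma W_cycle_orbit_decreasing:
  assumes "0 < lam" "lam < 1" "W_cycle lam ws x" "j < length ws"
  shows "orbit lam ws x (Suc j) \<le> orbit lam ws x j"
proof -
  have "ws ! j \<in> {0, 1/4}"
    using assms(3,4) nth_mem unfolding W_cycle_def by blast
  then have "ws ! j < 1/2"
    by auto
  moreover have "W lam (tau lam (ws ! j) (orbit lam ws x j)) = 1"
    using W_cycle_orbit_W[OF assms(3), of "Suc j"] assms(4) by (simp add: orbit_Suc)
  ultimately show ?thesis
    using assms W_cycle_orbit_nonneg W_cycle_orbit_W[OF assms(3), of j]
    by (simp add: orbit_Suc tau_le_on_half_lattice)
qed

theorem theorem3p3:
  fixes lam :: real
  assumes "0 < lam" and "lam < 1"
  shows "\<not> (\<exists>ws x. length ws \<ge> 2 \<and> W_cycle lam ws x)"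
proof
  assume "\<exists>ws x. length ws \<ge> 2 \<and> W_cycle lam ws x"
  then obtain ws x where len: "length ws \<ge> 2" and cycle: "W_cycle lam ws x" by blast
  define y where "y = orbit lam ws x"
  have decreasing: "y (Suc j) \<le> y j" if "j < length ws" for j
    unfolding y_def using W_cycle_orbit_decreasing[OF assms cycle that] .
  have "y (length ws) \<le> y 1"
    by (rule lift_Suc_antimono_le_ivl[where N = "{..<length ws}"]) (use decreasing len in auto)
  moreover have "y (length ws) = y 0"
    using cycle unfolding W_cycle_def y_def by simp
  moreover have "y 1 \<le> y 0"
    using decreasing[of 0] len by fastforce
  ultimately have "y 1 = y 0"
    by simp
  moreover have "y 1 \<noteq> y 0"
    using cycle len unfolding W_cycle_def y_def by simp
  ultimately show False
    by contradiction
qed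

end
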